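(* Let $\lambda\in X^+$ be a $p$-core. Then $$\sum_{(\alpha,l)}\nu_p(lp)\,\chi(s_{\alpha,l}\cdot\lambda)=\sum_{(\alpha,l)\in R(\lambda)}\nu_p(lp)\,\chi(s_{\alpha,l}\cdot\lambda),$$ where the left sum runs over all pairs $(\alpha,l)$ with $\alpha$ a positive root, $l$ an integer $\ge1$ and $\langle\lambda+\rho,\alpha^\vee\rangle-lp>0$, and $\nu_p$ is the $p$-adic valuation. (The left side is the right-hand side of Jantzen's sum formula for $\sum_{i>0}\mathrm{ch}\,\Delta(\lambda)^i$.)
   Context: Setup: $p>2$ is a prime, $m\ge1$, $G=\mathrm{Sp}_{2m}$ over an algebraically closed field of characteristic $p$, with diagonal maximal torus and weight lattice $X=\mathbb Z^m$ (standard basis $\varepsilon_1,\dots,\varepsilon_m$). Positive roots: $\varepsilon_i\pm\varepsilon_j$ ($1\le i<j\le m$) and $2\varepsilon_i$ ($1\le i\le m$). With the standard inner product, $\alpha^\vee=2\alpha/\langle\alpha,\alpha\rangle$, so $(\varepsilon_i\pm\varepsilon_j)^\vee=\varepsilon_i\pm\varepsilon_j$ and $(2\varepsilon_i)^\vee=\varepsilon_i$. $X^+=\{\lambda\in\mathbb Z^m:\lambda_1\ge\dots\ge\lambda_m\ge0\}$, identified with partitions with at most $m$ parts; $l(\lambda)$ is the number of nonzero parts. $\rho=(m,m-1,\dots,1)$. For a root $\alpha$ and $l\in\mathbb Z$, $s_{\alpha,l}(x)=x-(\langle x,\alpha^\vee\rangle-lp)\alpha$ and $w\cdot x=w(x+\rho)-\rho$.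 For $\mu\in X$, $\chi(\mu)\in\mathbb Z[X]$ is the Weyl character; $\chi(\mu)=0$ iff some entry of $\mu+\rho$ is $0$ or two entries of $\mu+\rho$ are equal up to sign, and otherwise $\chi(\mu)=\det(w)\chi(w\cdot\mu)$ for the unique signed permutation $w$ with $w\cdot\mu$ dominant. A $p$-core is $\lambda\in X^+$ such that for all $i\in\{1,\dots,m\}$ and all integers $l\ge1$ with $(\lambda+\rho)_i-lp>0$, the number $(\lambda+\rho)_i-lp$ occurs as an entry of $\lambda+\rho$. $R(\lambda)$ is the set of pairs $(\alpha,l)$ with $\alpha=\varepsilon_i+\varepsilon_j$, $1\le i<j\le l(\lambda)$, $l\ge1$ an integer, $a:=\langle\lambda+\rho,\alpha^\vee\rangle-lp\ge1$, $(\lambda+\rho)_j-a>0$ and $\chi(s_{\alpha,l}\cdot\lambda)\ne0$. *)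

theory Defs
  imports "HOL-Library.Function_Algebras" "HOL-Library.Poly_Mapping"
    "HOL-Combinatorics.Permutations" "HOL-Computational_Algebra.Primes"
begin

(* Weights: X = Z^m, represented as functions nat => int, coordinates 1..m, zero elsewhere. *)
type_synonym weight = "nat \<Rightarrow> int"

(* Group ring Z[X] (on the ambient lattice nat => int, containing Z[Z^m]) *)
type_synonym ZX = "weight \<Rightarrow>\<^sub>0 int"

definition e :: "weight \<Rightarrow> ZX" where
  "e \<mu> = Poly_Mapping.single \<mu> 1"

definition rho :: "nat \<Rightarrow> weight" where
  "rho m = (\<lambda>i. if 1 \<le> i \<and> i \<le> m then int (m + 1 - i) else 0)"

definition valid_weight :: "nat \<Rightarrow> weight \<Rightarrow> bool" where
  "valid_weight m x \<longleftrightarrow> (\<forall>i. i \<notin> {1..m} \<longrightarrow> x i = 0)"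

definition dominant :: "nat \<Rightarrow> weight \<Rightarrow> bool" where
  "dominant m x \<longleftrightarrow> valid_weight m x \<and> (\<forall>i\<in>{1..m}. 0 \<le> x i) \<and>
     (\<forall>i j. 1 \<le> i \<longrightarrow> i \<le> j \<longrightarrow> j \<le> m \<longrightarrow> x j \<le> x i)"

definition num_parts :: "nat \<Rightarrow> weight \<Rightarrow> nat" where
  "num_parts m x = card {i\<in>{1..m}. x i \<noteq> 0}"

(* Weyl group W = signed permutations of {1..m}: (sigma, s) acts by x |-> (s_i * x_(sigma i))_i *)
definition weyl_group :: "nat \<Rightarrow> ((nat \<Rightarrow> nat) \<times> (nat \<Rightarrow> int)) set" where
  "weyl_group m = {(\<sigma>, s). \<sigma> permutes {1..m} \<and> (\<forall>i\<in>{1..m}. s i \<in> {1, -1}) \<and>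
                            (\<forall>i. i \<notin> {1..m} \<longrightarrow> s i = 1)}"

definition act :: "nat \<Rightarrow> (nat \<Rightarrow> nat) \<times> (nat \<Rightarrow> int) \<Rightarrow> weight \<Rightarrow> weight" where
  "act m w x = (\<lambda>i. if i \<in> {1..m} then snd w i * x (fst w i) else 0)"

definition sdet :: "nat \<Rightarrow> (nat \<Rightarrow> nat) \<times> (nat \<Rightarrow> int) \<Rightarrow> int" where
  "sdet m w = sign (fst w) * (\<Prod>i\<in>{1..m}. snd w i)"

definition dot :: "nat \<Rightarrow> (nat \<Rightarrow> nat) \<times> (nat \<Rightarrow> int) \<Rightarrow> weight \<Rightarrow> weight" where
  "dot m w x = (\<lambda>i. act m w (\<lambda>k. x k + rho m k) i - rho m i)"

definition alt :: "nat \<Rightarrow> weight \<Rightarrow> ZX" where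
  "alt m \<nu> = (\<Sum>w\<in>weyl_group m. of_int (sdet m w) * e (act m w \<nu>))"

(* Weyl character of a dominant weight, via Weyl's character formula *)
definition chi_dom :: "nat \<Rightarrow> weight \<Rightarrow> ZX" where
  "chi_dom m lam = (THE f. f * alt m (rho m) = alt m (\<lambda>i. lam i + rho m i))"

definition regular :: "nat \<Rightarrow> weight \<Rightarrow> bool" where
  "regular m x \<longleftrightarrow> (\<forall>i\<in>{1..m}. x i \<noteq> 0) \<and>
     (\<forall>i\<in>{1..m}. \<forall>j\<in>{1..m}. i \<noteq> j \<longrightarrow> \<bar>x i\<bar> \<noteq> \<bar>x j\<bar>)"

definition chi :: "nat \<Rightarrow> weight \<Rightarrow> ZX" where
  "chi m \<mu> = (if \<not> regular m (\<lambda>i. \<mu> i + rho m i) then 0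
     else (let w = (THE w. w \<in> weyl_group m \<and> dominant m (dot m w \<mu>))
           in of_int (sdet m w) * chi_dom m (dot m w \<mu>)))"

definition eps :: "nat \<Rightarrow> weight" where
  "eps i = (\<lambda>k. if k = i then 1 else 0)"

definition pos_roots :: "nat \<Rightarrow> weight set" where
  "pos_roots m =
     {(\<lambda>k. eps i k + eps j k) | i j. 1 \<le> i \<and> i < j \<and> j \<le> m} \<union>
     {(\<lambda>k. eps i k - eps j k) | i j. 1 \<le> i \<and> i < j \<and> j \<le> m} \<union>
     {(\<lambda>k. 2 * eps i k) | i. 1 \<le> i \<and> i \<le> m}"

definition inner :: "nat \<Rightarrow> weight \<Rightarrow> weight \<Rightarrow> int" where
  "inner m x y = (\<Sum>k\<in>{1..m}. x k * y k)"

(* alpha^vee = 2 alpha / <alpha,alpha> (exact for the roots of C_m) *)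
definition coroot :: "nat \<Rightarrow> weight \<Rightarrow> weight" where
  "coroot m \<alpha> = (\<lambda>k. (2 * \<alpha> k) div inner m \<alpha> \<alpha>)"

definition pair :: "nat \<Rightarrow> weight \<Rightarrow> weight \<Rightarrow> int" where
  "pair m x \<alpha> = inner m x (coroot m \<alpha>)"

definition aff_refl :: "nat \<Rightarrow> nat \<Rightarrow> weight \<Rightarrow> int \<Rightarrow> weight \<Rightarrow> weight" where
  "aff_refl m p \<alpha> l x = (\<lambda>k. x k - (pair m x \<alpha> - l * int p) * \<alpha> k)"

definition aff_dot :: "nat \<Rightarrow> nat \<Rightarrow> weight \<Rightarrow> int \<Rightarrow> weight \<Rightarrow> weight" where
  "aff_dot m p \<alpha> l x = (\<lambda>k. aff_refl m p \<alpha> l (\<lambda>i. x i + rho m i) k - rho m k)"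

definition p_core :: "nat \<Rightarrow> nat \<Rightarrow> weight \<Rightarrow> bool" where
  "p_core m p lam \<longleftrightarrow> dominant m lam \<and>
     (\<forall>i\<in>{1..m}. \<forall>l::int. l \<ge> 1 \<longrightarrow> lam i + rho m i - l * int p > 0 \<longrightarrow>
        (\<exists>k\<in>{1..m}. lam k + rho m k = lam i + rho m i - l * int p))"

definition jantzen_pairs :: "nat \<Rightarrow> nat \<Rightarrow> weight \<Rightarrow> (weight \<times> int) set" where
  "jantzen_pairs m p lam = {(\<alpha>, l). \<alpha> \<in> pos_roots m \<and> l \<ge> 1 \<and>
      pair m (\<lambda>i. lam i + rho m i) \<alpha> - l * int p > 0}"

definition R_set :: "nat \<Rightarrow> nat \<Rightarrow> weight \<Rightarrow> (weight \<times> int) set" where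
  "R_set m p lam = {(\<alpha>, l). \<exists>i j. \<alpha> = (\<lambda>k. eps i k + eps j k) \<and>
      1 \<le> i \<and> i < j \<and> j \<le> num_parts m lam \<and> l \<ge> 1 \<and>
      (let a = pair m (\<lambda>k. lam k + rho m k) \<alpha> - l * int p in
         a \<ge> 1 \<and> lam j + rho m j - a > 0) \<and>
      chi m (aff_dot m p \<alpha> l lam) \<noteq> 0}"

definition jantzen_term :: "nat \<Rightarrow> nat \<Rightarrow> weight \<Rightarrow> weight \<times> int \<Rightarrow> ZX" where
  "jantzen_term m p lam al =
     of_nat (multiplicity (int p) (snd al * int p)) * chi m (aff_dot m p (fst al) (snd al) lam)"

end

(*
  Write x = lambda + rho; for a p-core,
  x_i - lp > 0 is always another entry x_k of x. This kills every term with alpha = e_i - e_j: the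
  reflected weight has the entry x_i - lp twice. The terms with alpha = 2e_i are indexed by the
  "links" x_i - lp = x_j, and cancel against the terms (e_i + e_j, l) of the same links, because the
  two reflected weights differ by a sign change in coordinate j. Among the remaining terms with
  alpha = e_i + e_j, a nonzero character forces x_i < lp < x_i + x_j (again by the core property)
  and j <= l(lambda), which are exactly the conditions defining R(lambda).
*)

theory Submission
  imports Defs
begin

section \<open>Weyl group orbits and the characters \<open>\<chi>(\<mu>)\<close>\<close>

lemma rho_eq: "i \<in> {1..m} \<Longrightarrow> rho m i = int m + 1 - int i"
  by (auto simp: rho_def of_nat_diff)

lemma rho_outside: "i \<notin> {1..m} \<Longrightarrow> rho m i = 0"
  by (simp add: rho_def)

lemma valid_weight_act: "valid_weight m (act m w y)"
  by (simp add: valid_weight_def act_def)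

lemma strict_antimono_on_gap:
  fixes f :: "nat \<Rightarrow> int"
  assumes dec: "strict_antimono_on {1..m} f" and "1 \<le> i" "i \<le> j" "j \<le> m"
  shows "f j + int (j - i) \<le> f i"
  using assms(3-)
proof (induction j)
  case (Suc j)
  show ?case
  proof (cases "i = Suc j")
    case False
    with Suc have "i \<le> j" "f j + int (j - i) \<le> f i" by simp_all
    moreover have "f (Suc j) < f j"
      using monotone_onD[OF dec, of j "Suc j"] Suc \<open>i \<le> j\<close> \<open>1 \<le> i\<close> by simp
    ultimately show ?thesis by (simp add: of_nat_diff)
  qed simp
qed simp

lemma dominant_minus_rho_iff:
  assumes "valid_weight m y"
  shows "dominant m (\<lambda>i. y i - rho m i) \<longleftrightarrow>
    strict_antimono_on {1..m} y \<and> (\<forall>i\<in>{1..m}. 0 < y i)"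
proof
  assume dom: "dominant m (\<lambda>i. y i - rho m i)"
  show "strict_antimono_on {1..m} y \<and> (\<forall>i\<in>{1..m}. 0 < y i)"
  proof (intro conjI ballI monotone_onI)
    fix i j assume "i \<in> {1..m}" "j \<in> {1..m}" "i < j"
    moreover have "y j - rho m j \<le> y i - rho m i"
      using dom \<open>i < j\<close> \<open>i \<in> {1..m}\<close> \<open>j \<in> {1..m}\<close> by (simp add: dominant_def)
    ultimately show "y j < y i" using rho_eq[of i m] rho_eq[of j m] by simp
  next
    fix i assume "i \<in> {1..m}"
    then have "rho m i \<le> y i" using dom by (simp add: dominant_def)
    then show "0 < y i" using rho_eq[OF \<open>i \<in> {1..m}\<close>] \<open>i \<in> {1..m}\<close> by simp
  qed
next
  assume "strict_antimono_on {1..m} y \<and> (\<forall>i\<in>{1..m}. 0 < y i)"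
  then have dec: "strict_antimono_on {1..m} y" and pos: "\<forall>i\<in>{1..m}. 0 < y i" by auto
  show "dominant m (\<lambda>i. y i - rho m i)"
    unfolding dominant_def valid_weight_def
  proof (intro conjI allI impI ballI)
    fix i assume "i \<notin> {1..m}"
    then show "y i - rho m i = 0" using assms by (simp add: valid_weight_def rho_outside)
  next
    fix i assume i: "i \<in> {1..m}"
    then have "y m + int (m - i) \<le> y i" "0 < y m"
      using strict_antimono_on_gap[OF dec, of i m] pos by auto
    then show "0 \<le> y i - rho m i" using rho_eq[OF i] i by (auto simp: of_nat_diff)
  next
    fix i j :: nat assume "1 \<le> i" "i \<le> j" "j \<le> m"
    then show "y j - rho m j \<le> y i - rho m i"
      using strict_antimono_on_gap[OF dec, of i j] rho_eq[of i m] rho_eq[of j m]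
      by (auto simp: of_nat_diff)
  qed
qed

lemma strict_antimono_on_eq_sorted_nth:
  fixes f :: "nat \<Rightarrow> int"
  assumes dec: "strict_antimono_on {1..m} f" and i: "i \<in> {1..m}"
  shows "f i = sorted_list_of_set (f ` {1..m}) ! (m - i)"
proof -
  define M where "M = map (\<lambda>k. f (m - k)) [0..<m]"
  have nth: "k < m \<Longrightarrow> M ! k = f (m - k)" for k by (simp add: M_def)
  have "sorted_wrt (<) M"
    unfolding sorted_wrt_iff_nth_less
    using nth monotone_onD[OF dec] by (auto simp: M_def)
  moreover have "set M = f ` {1..m}"
  proof
    show "f ` {1..m} \<subseteq> set M"
    proof
      fix s assume "s \<in> f ` {1..m}"
      then obtain k where "k \<in> {1..m}" "s = f k" by auto
      then show "s \<in> set M" using nth_mem[of "m - k" M] nth[of "m - k"] by (auto simp: M_def)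
    qed
  qed (auto simp: M_def)
  ultimately have "sorted_list_of_set (f ` {1..m}) = M"
    by (metis finite_atLeastAtMost finite_imageI sorted_list_of_set.idem_if_sorted_distinct
        strict_sorted_iff)
  then show ?thesis using nth[of "m - i"] i by auto
qed

lemma exists_permutation_strict_antimono:
  fixes g :: "nat \<Rightarrow> int"
  assumes inj: "inj_on g {1..m}"
  obtains \<sigma> where "\<sigma> permutes {1..m}" "strict_antimono_on {1..m} (g \<circ> \<sigma>)"
proof -
  define L where "L = sorted_list_of_set (g ` {1..m})"
  have lenL: "length L = m" using card_image[OF inj] by (simp add: L_def)
  have setL: "set L = g ` {1..m}" by (simp add: L_def)
  have sL: "sorted_wrt (<) L" by (simp add: L_def sorted_list_of_set.strict_sorted_key_list_of_set)
  define z where "z = (\<lambda>i. L ! (m - i))"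
  have zS: "z i \<in> g ` {1..m}" if "i \<in> {1..m}" for i
    using that lenL setL nth_mem[of "m - i" L] by (auto simp: z_def)
  have zdec: "strict_antimono_on {1..m} z"
    by (rule monotone_onI) (use sorted_wrt_nth_less[OF sL] lenL in \<open>auto simp: z_def\<close>)
  define \<sigma> where "\<sigma> = (\<lambda>i. if i \<in> {1..m} then the_inv_into {1..m} g (z i) else i)"
  have \<sigma>_in: "\<sigma> i \<in> {1..m}" and g\<sigma>: "g (\<sigma> i) = z i" if "i \<in> {1..m}" for i
    using the_inv_into_into[OF inj zS[OF that] subset_refl] f_the_inv_into_f[OF inj zS[OF that]] that
    by (simp_all add: \<sigma>_def)
  have "inj_on \<sigma> {1..m}"
  proof (rule inj_onI)
    fix a b assume "a \<in> {1..m}" "b \<in> {1..m}" "\<sigma> a = \<sigma> b"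
    then have "z a = z b" using g\<sigma> by metis
    then show "a = b" using monotone_onD[OF zdec] \<open>a \<in> {1..m}\<close> \<open>b \<in> {1..m}\<close>
      by (metis less_irrefl linorder_neqE_nat)
  qed
  moreover have "\<sigma> ` {1..m} = {1..m}"
    using endo_inj_surj[OF finite_atLeastAtMost _ \<open>inj_on \<sigma> {1..m}\<close>] \<sigma>_in by blast
  ultimately have "bij_betw \<sigma> {1..m} {1..m}" by (simp add: bij_betw_def)
  then have "\<sigma> permutes {1..m}" by (rule bij_imp_permutes) (auto simp: \<sigma>_def)
  moreover have "strict_antimono_on {1..m} (g \<circ> \<sigma>)"
    using zdec g\<sigma> by (auto simp: monotone_on_def)
  ultimately show ?thesis by (rule that)
qed

lemma regular_abs_inj: "regular m y \<Longrightarrow> inj_on (\<lambda>k. \<bar>y k\<bar>) {1..m}"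
  by (auto simp: regular_def inj_on_def)

lemma exists_weyl_dominant:
  assumes reg: "regular m y"
  obtains w where "w \<in> weyl_group m" "dominant m (\<lambda>i. act m w y i - rho m i)"
proof -
  obtain \<sigma> where perm: "\<sigma> permutes {1..m}"
    and dec: "strict_antimono_on {1..m} ((\<lambda>k. \<bar>y k\<bar>) \<circ> \<sigma>)"
    using exists_permutation_strict_antimono[OF regular_abs_inj[OF reg]] by blast
  define s where "s = (\<lambda>i. if i \<in> {1..m} then sgn (y (\<sigma> i)) else (1::int))"
  have y_nz: "y (\<sigma> i) \<noteq> 0" if "i \<in> {1..m}" for i
    using reg permutes_in_image[OF perm] that unfolding regular_def by blast
  have w: "(\<sigma>, s) \<in> weyl_group m"
    using perm y_nz by (auto simp: weyl_group_def s_def sgn_if)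
  have act_eq: "act m (\<sigma>, s) y i = \<bar>y (\<sigma> i)\<bar>" if "i \<in> {1..m}" for i
    using that by (auto simp: act_def s_def sgn_if)
  have "dominant m (\<lambda>i. act m (\<sigma>, s) y i - rho m i)"
    unfolding dominant_minus_rho_iff[OF valid_weight_act]
  proof (intro conjI ballI monotone_onI)
    fix i j assume "i \<in> {1..m}" "j \<in> {1..m}" "i < j"
    then show "act m (\<sigma>, s) y j < act m (\<sigma>, s) y i"
      using monotone_onD[OF dec] act_eq by simp
  next
    fix i assume "i \<in> {1..m}"
    then show "0 < act m (\<sigma>, s) y i" using act_eq y_nz by simp
  qed
  with w show ?thesis by (rule that)
qed

lemma weyl_act_regular_inj:
  assumes reg: "regular m y" and w: "w \<in> weyl_group m" and w': "w' \<in> weyl_group m"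
    and eq: "\<And>i. i \<in> {1..m} \<Longrightarrow> act m w y i = act m w' y i"
  shows "w = w'"
proof -
  obtain \<sigma> s \<sigma>' s' where ws: "w = (\<sigma>, s)" "w' = (\<sigma>', s')" by fastforce
  have perm: "\<sigma> permutes {1..m}" "\<sigma>' permutes {1..m}"
    and signs: "\<forall>i\<in>{1..m}. s i \<in> {1,-1}" "\<forall>i\<in>{1..m}. s' i \<in> {1,-1}"
    and outside: "\<forall>i. i \<notin> {1..m} \<longrightarrow> s i = 1 \<and> s' i = 1"
    using w w' ws by (auto simp: weyl_group_def)
  have "\<sigma> i = \<sigma>' i \<and> s i = s' i" for i
  proof (cases "i \<in> {1..m}")
    case True
    have in_m: "\<sigma> i \<in> {1..m}" "\<sigma>' i \<in> {1..m}"
      using perm[THEN permutes_in_image] True by blast+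
    have e: "s i * y (\<sigma> i) = s' i * y (\<sigma>' i)" using eq[OF True] True ws by (simp add: act_def)
    moreover have "s i \<in> {1,-1}" "s' i \<in> {1,-1}" using signs True by blast+
    then have "\<bar>s i\<bar> = 1" "\<bar>s' i\<bar> = 1" by auto
    moreover have "\<bar>s i\<bar> * \<bar>y (\<sigma> i)\<bar> = \<bar>s' i\<bar> * \<bar>y (\<sigma>' i)\<bar>"
      using e by (simp only: abs_mult[symmetric])
    ultimately have "\<bar>y (\<sigma> i)\<bar> = \<bar>y (\<sigma>' i)\<bar>" by simp
    then have "\<sigma> i = \<sigma>' i" using reg in_m unfolding regular_def by blast
    moreover have "y (\<sigma> i) \<noteq> 0" using reg in_m unfolding regular_def by blast
    ultimately show ?thesis using e by simp
  next
    case False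
    then show ?thesis using perm outside by (simp add: permutes_not_in)
  qed
  then show ?thesis using ws by (simp add: fun_eq_iff)
qed

lemma ex1_weyl_dominant:
  assumes reg: "regular m y"
  shows "\<exists>!w. w \<in> weyl_group m \<and> dominant m (\<lambda>i. act m w y i - rho m i)"
proof (rule ex_ex1I)
  show "\<exists>w. w \<in> weyl_group m \<and> dominant m (\<lambda>i. act m w y i - rho m i)"
    using exists_weyl_dominant[OF reg] by blast
next
  have sorted: "act m w y i = sorted_list_of_set ((\<lambda>k. \<bar>y k\<bar>) ` {1..m}) ! (m - i)"
    if w: "w \<in> weyl_group m" and dom: "dominant m (\<lambda>i. act m w y i - rho m i)"
      and i: "i \<in> {1..m}" for w i
  proof -
    have dec: "strict_antimono_on {1..m} (act m w y)" and pos: "\<forall>i\<in>{1..m}. 0 < act m w y i"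
      using dom unfolding dominant_minus_rho_iff[OF valid_weight_act] by auto
    have perm: "fst w permutes {1..m}" and signs: "\<forall>i\<in>{1..m}. snd w i \<in> {1,-1}"
      using w by (auto simp: weyl_group_def)
    have "act m w y k = \<bar>y (fst w k)\<bar>" if "k \<in> {1..m}" for k
      using pos signs that by (force simp: act_def)
    then have "act m w y ` {1..m} = (\<lambda>k. \<bar>y k\<bar>) ` (fst w ` {1..m})"
      by (simp add: image_image)
    also have "\<dots> = (\<lambda>k. \<bar>y k\<bar>) ` {1..m}" by (simp only: permutes_image[OF perm])
    finally show ?thesis using strict_antimono_on_eq_sorted_nth[OF dec i] by simp
  qed
  fix w w' assume "w \<in> weyl_group m \<and> dominant m (\<lambda>i. act m w y i - rho m i)"
    "w' \<in> weyl_group m \<and> dominant m (\<lambda>i. act m w' y i - rho m i)"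
  then show "w = w'" by (intro weyl_act_regular_inj[OF reg]) (simp_all add: sorted)
qed

lemma chi_nonregular: "\<not> regular m (\<lambda>i. \<mu> i + rho m i) \<Longrightarrow> chi m \<mu> = 0"
  by (simp add: chi_def)

lemma chi_eq_sdet_chi_dom:
  assumes reg: "regular m (\<lambda>i. \<mu> i + rho m i)"
    and w: "w \<in> weyl_group m" and dom: "dominant m (dot m w \<mu>)"
  shows "chi m \<mu> = of_int (sdet m w) * chi_dom m (dot m w \<mu>)"
proof -
  have "(THE w. w \<in> weyl_group m \<and> dominant m (dot m w \<mu>)) = w"
    using ex1_weyl_dominant[OF reg] w dom by (intro the1_equality) (simp_all add: dot_def)
  then show ?thesis using reg by (simp add: chi_def Let_def)
qed

lemma regular_cong_abs:
  assumes abs_eq: "\<And>k. \<bar>y' k\<bar> = \<bar>y k\<bar>"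
  shows "regular m y' \<longleftrightarrow> regular m y"
proof -
  have "y' k = 0 \<longleftrightarrow> y k = 0" for k by (metis abs_eq abs_eq_0)
  then show ?thesis by (simp add: regular_def abs_eq)
qed

lemma not_regular_if_abs_eq:
  "a \<in> {1..m} \<Longrightarrow> b \<in> {1..m} \<Longrightarrow> a \<noteq> b \<Longrightarrow> \<bar>y a\<bar> = \<bar>y b\<bar> \<Longrightarrow> \<not> regular m y"
  unfolding regular_def by blast

lemma not_regular_if_zero: "a \<in> {1..m} \<Longrightarrow> y a = 0 \<Longrightarrow> \<not> regular m y"
  unfolding regular_def by blast

definition flip_sign :: "nat \<Rightarrow> nat \<Rightarrow> (nat \<Rightarrow> nat) \<times> (nat \<Rightarrow> int) \<Rightarrow> (nat \<Rightarrow> nat) \<times> (nat \<Rightarrow> int)"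
  where "flip_sign m j w = (fst w, \<lambda>i. if i \<in> {1..m} \<and> fst w i = j then - snd w i else snd w i)"

lemma flip_sign_in_weyl_group: "w \<in> weyl_group m \<Longrightarrow> flip_sign m j w \<in> weyl_group m"
  by (auto simp: weyl_group_def flip_sign_def)

lemma act_flip_sign:
  assumes "\<And>k. y' k = (if k = j then - y k else y k)"
  shows "act m (flip_sign m j w) y' = act m w y"
  using assms by (auto simp: fun_eq_iff act_def flip_sign_def)

lemma sdet_flip_sign:
  assumes w: "w \<in> weyl_group m" and j: "j \<in> {1..m}"
  shows "sdet m (flip_sign m j w) = - sdet m w"
proof -
  have perm: "fst w permutes {1..m}" using w by (auto simp: weyl_group_def mem_Times_iff)
  define i0 where "i0 = inv (fst w) j"
  have i0: "i0 \<in> {1..m}" unfolding i0_def using permutes_in_image[OF permutes_inv[OF perm]] j by blast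
  have hit: "fst w i = j \<longleftrightarrow> i = i0" for i
    using permutes_inverses[OF perm] unfolding i0_def by metis
  have "(\<Prod>i\<in>{1..m}. snd (flip_sign m j w) i) = (\<Prod>i\<in>{1..m}. snd w i * (if i = i0 then -1 else 1))"
    by (rule prod.cong) (auto simp: flip_sign_def hit)
  also have "\<dots> = - (\<Prod>i\<in>{1..m}. snd w i)"
    using i0 by (simp add: prod.distrib prod.delta)
  finally show ?thesis by (simp add: sdet_def flip_sign_def)
qed

lemma chi_sign_flip:
  assumes j: "j \<in> {1..m}"
    and flip: "\<And>k. \<mu>' k + rho m k = (if k = j then - (\<mu> k + rho m k) else \<mu> k + rho m k)"
  shows "chi m \<mu>' = - chi m \<mu>"
proof -
  have reg_iff: "regular m (\<lambda>k. \<mu>' k + rho m k) \<longleftrightarrow> regular m (\<lambda>k. \<mu> k + rho m k)"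
    by (rule regular_cong_abs) (simp only: flip if_distrib[of abs] abs_minus_cancel if_cancel)
  show ?thesis
  proof (cases "regular m (\<lambda>k. \<mu> k + rho m k)")
    case False
    then show ?thesis using reg_iff by (simp add: chi_nonregular)
  next
    case reg: True
    obtain w where w: "w \<in> weyl_group m" and dom: "dominant m (dot m w \<mu>)"
      using exists_weyl_dominant[OF reg] unfolding dot_def by blast
    have dot_eq: "dot m (flip_sign m j w) \<mu>' = dot m w \<mu>"
      using act_flip_sign[of "\<lambda>k. \<mu>' k + rho m k" j "\<lambda>k. \<mu> k + rho m k"] flip
      by (simp add: dot_def)
    have "chi m \<mu>' = of_int (sdet m (flip_sign m j w)) * chi_dom m (dot m (flip_sign m j w) \<mu>')"
      by (rule chi_eq_sdet_chi_dom) (use reg reg_iff flip_sign_in_weyl_group[OF w] dot_eq dom in auto)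
    then show ?thesis using chi_eq_sdet_chi_dom[OF reg w dom] sdet_flip_sign[OF w j] dot_eq by simp
  qed
qed

section \<open>Positive roots of type \<open>C\<close>\<close>

definition eps_sum :: "nat \<Rightarrow> nat \<Rightarrow> weight" where "eps_sum i j = (\<lambda>k. eps i k + eps j k)"
definition eps_diff :: "nat \<Rightarrow> nat \<Rightarrow> weight" where "eps_diff i j = (\<lambda>k. eps i k - eps j k)"
definition two_eps :: "nat \<Rightarrow> weight" where "two_eps i = (\<lambda>k. 2 * eps i k)"

lemma eps_sum_apply: "eps_sum i j k = (if k = i then 1 else 0) + (if k = j then 1 else 0)"
  by (simp add: eps_sum_def eps_def)

lemma eps_diff_apply: "eps_diff i j k = (if k = i then 1 else 0) - (if k = j then 1 else 0)"
  by (simp add: eps_diff_def eps_def)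

lemma two_eps_apply: "two_eps i k = (if k = i then 2 else 0)"
  by (simp add: two_eps_def eps_def)

lemma pos_roots_iff:
  "\<alpha> \<in> pos_roots m \<longleftrightarrow>
    (\<exists>i j. 1 \<le> i \<and> i < j \<and> j \<le> m \<and> (\<alpha> = eps_sum i j \<or> \<alpha> = eps_diff i j)) \<or>
    (\<exists>i. 1 \<le> i \<and> i \<le> m \<and> \<alpha> = two_eps i)"
  unfolding pos_roots_def eps_sum_def eps_diff_def two_eps_def by blast

lemma finite_pos_roots: "finite (pos_roots m)"
proof -
  have "pos_roots m \<subseteq> {eps_sum i j | i j. i \<in> {1..m} \<and> j \<in> {1..m}} \<union>
      {eps_diff i j | i j. i \<in> {1..m} \<and> j \<in> {1..m}} \<union> two_eps ` {1..m}"
  proof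
    fix \<alpha> assume "\<alpha> \<in> pos_roots m"
    then consider i j where "1 \<le> i" "i < j" "j \<le> m" "\<alpha> = eps_sum i j \<or> \<alpha> = eps_diff i j"
      | i where "1 \<le> i" "i \<le> m" "\<alpha> = two_eps i"
      unfolding pos_roots_iff by blast
    then show "\<alpha> \<in> {eps_sum i j | i j. i \<in> {1..m} \<and> j \<in> {1..m}} \<union>
      {eps_diff i j | i j. i \<in> {1..m} \<and> j \<in> {1..m}} \<union> two_eps ` {1..m}"
    proof cases
      case (1 i j)
      then have "i \<in> {1..m}" "j \<in> {1..m}" by auto
      with 1(4) show ?thesis by blast
    qed auto
  qed
  then show ?thesis by (rule finite_subset) (intro finite_UnI finite_image_set2 finite_imageI; simp)
qed

lemma eps_sum_inj: "i < j \<Longrightarrow> i' < j' \<Longrightarrow> eps_sum i j = eps_sum i' j' \<Longrightarrow> i = i' \<and> j = j'"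
proof -
  assume ij: "i < j" "i' < j'" and eq: "eps_sum i j = eps_sum i' j'"
  have "eps_sum i j i = eps_sum i' j' i" "eps_sum i j j = eps_sum i' j' j"
    "eps_sum i j i' = eps_sum i' j' i'" using eq by simp_all
  then show ?thesis using ij unfolding eps_sum_apply by (auto split: if_splits)
qed

lemma two_eps_inj: "two_eps i = two_eps i' \<Longrightarrow> i = i'"
  by (metis two_eps_apply zero_neq_numeral)

lemma two_eps_ne_eps_sum: "i' < j' \<Longrightarrow> two_eps i \<noteq> eps_sum i' j'"
proof
  assume "i' < j'" "two_eps i = eps_sum i' j'"
  then have "two_eps i i = eps_sum i' j' i" by simp
  with \<open>i' < j'\<close> show False unfolding eps_sum_apply two_eps_apply by (auto split: if_splits)
qed

lemma inner_eps: "i \<in> {1..m} \<Longrightarrow> inner m y (eps i) = y i"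
  by (simp add: inner_def eps_def if_distrib[of "(*) _"] sum.delta' cong: if_cong)

lemma pair_eps_sum:
  assumes "1 \<le> i" "i < j" "j \<le> m"
  shows "pair m y (eps_sum i j) = y i + y j"
proof -
  have inner_sum: "inner m z (eps_sum i j) = z i + z j" for z
    using assms inner_eps[of i m z] inner_eps[of j m z]
    by (simp add: inner_def eps_sum_def distrib_left sum.distrib)
  then have "coroot m (eps_sum i j) = eps_sum i j"
    using assms by (simp add: coroot_def eps_sum_apply fun_eq_iff)
  then show ?thesis by (simp add: pair_def inner_sum)
qed

lemma pair_eps_diff:
  assumes "1 \<le> i" "i < j" "j \<le> m"
  shows "pair m y (eps_diff i j) = y i - y j"
proof -
  have inner_diff: "inner m z (eps_diff i j) = z i - z j" for z
    using assms inner_eps[of i m z] inner_eps[of j m z]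
    by (simp add: inner_def eps_diff_def right_diff_distrib sum_subtractf)
  then have "coroot m (eps_diff i j) = eps_diff i j"
    using assms by (auto simp: coroot_def eps_diff_apply fun_eq_iff)
  then show ?thesis by (simp add: pair_def inner_diff)
qed

lemma pair_two_eps:
  assumes "i \<in> {1..m}"
  shows "pair m y (two_eps i) = y i"
proof -
  have "inner m z (two_eps i) = 2 * inner m z (eps i)" for z
    by (simp add: inner_def two_eps_def sum_distrib_left mult.left_commute)
  then have "inner m z (two_eps i) = 2 * z i" for z using assms by (simp add: inner_eps)
  then have "coroot m (two_eps i) = eps i"
    using assms by (auto simp: coroot_def two_eps_apply eps_def fun_eq_iff)
  then show ?thesis using assms by (simp add: pair_def inner_eps)
qed

lemma num_parts_le: "num_parts m lam \<le> m"
proof -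
  have "num_parts m lam \<le> card {1..m}" unfolding num_parts_def by (rule card_mono) auto
  then show ?thesis by simp
qed

lemma dominant_zero_beyond_num_parts:
  assumes dom: "dominant m lam" and j: "j \<in> {1..m}" and beyond: "num_parts m lam < j"
  shows "lam j = 0"
proof (rule ccontr)
  assume "lam j \<noteq> 0"
  have "{1..j} \<subseteq> {i\<in>{1..m}. lam i \<noteq> 0}"
  proof
    fix i assume i: "i \<in> {1..j}"
    then have "lam j \<le> lam i" "0 \<le> lam j" using dom j by (auto simp: dominant_def)
    then show "i \<in> {i\<in>{1..m}. lam i \<noteq> 0}" using i j \<open>lam j \<noteq> 0\<close> by auto
  qed
  then have "j \<le> num_parts m lam"
    using card_mono[of "{i\<in>{1..m}. lam i \<noteq> 0}" "{1..j}"] by (simp add: num_parts_def)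
  with beyond show False by simp
qed

section \<open>The Jantzen sum of a \<open>p\<close>-core\<close>

locale p_core_weight =
  fixes m p :: nat and lam :: weight
  assumes p_pos: "0 < p" and p_core: "p_core m p lam"
begin

definition lam_rho :: weight where "lam_rho = (\<lambda>i. lam i + rho m i)"

lemma lam_dominant: "dominant m lam"
  using p_core by (simp add: p_core_def)

lemma lam_rho_eq: "i \<in> {1..m} \<Longrightarrow> lam_rho i = lam i + int m + 1 - int i"
  by (simp add: lam_rho_def rho_eq)

lemma lam_rho_pos: "i \<in> {1..m} \<Longrightarrow> 1 \<le> lam_rho i"
  using lam_dominant lam_rho_eq by (force simp: dominant_def)

lemma lam_rho_less_iff:
  assumes "i \<in> {1..m}" "j \<in> {1..m}"
  shows "lam_rho j < lam_rho i \<longleftrightarrow> i < j"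
proof -
  have "lam_rho b < lam_rho a" if "a \<in> {1..m}" "b \<in> {1..m}" "a < b" for a b
  proof -
    have "lam b \<le> lam a" using lam_dominant that by (simp add: dominant_def)
    then show ?thesis using that lam_rho_eq by simp
  qed
  then show ?thesis using assms by (metis less_asym linorder_neqE_nat)
qed

lemma lam_rho_inj: "i \<in> {1..m} \<Longrightarrow> j \<in> {1..m} \<Longrightarrow> lam_rho i = lam_rho j \<Longrightarrow> i = j"
  using lam_rho_less_iff by (metis less_irrefl linorder_neqE_nat)

lemma core_step:
  assumes i: "i \<in> {1..m}" and l: "1 \<le> l" and pos: "0 < lam_rho i - l * int p"
  obtains k where "k \<in> {1..m}" "i < k" "lam_rho k = lam_rho i - l * int p"
proof -
  have "\<exists>k\<in>{1..m}. lam_rho k = lam_rho i - l * int p"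
    using p_core i l pos unfolding p_core_def lam_rho_def by blast
  then obtain k where k: "k \<in> {1..m}" "lam_rho k = lam_rho i - l * int p" by blast
  moreover have "i < k" using k lam_rho_less_iff[OF i k(1)] p_pos l by simp
  ultimately show ?thesis using that by blast
qed

definition reflected :: "weight \<Rightarrow> int \<Rightarrow> weight" where
  "reflected \<alpha> l = (\<lambda>k. lam_rho k - (pair m lam_rho \<alpha> - l * int p) * \<alpha> k)"

lemma aff_dot_plus_rho: "aff_dot m p \<alpha> l lam k + rho m k = reflected \<alpha> l k"
  by (simp add: aff_dot_def aff_refl_def reflected_def lam_rho_def)

lemma regular_of_chi_nonzero:
  "chi m (aff_dot m p \<alpha> l lam) \<noteq> 0 \<Longrightarrow> regular m (reflected \<alpha> l)"
proof -
  have "(\<lambda>k. aff_dot m p \<alpha> l lam k + rho m k) = reflected \<alpha> l"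
    by (rule ext) (rule aff_dot_plus_rho)
  then show "chi m (aff_dot m p \<alpha> l lam) \<noteq> 0 \<Longrightarrow> regular m (reflected \<alpha> l)"
    using chi_nonregular[of m "aff_dot m p \<alpha> l lam"] by auto
qed

lemma reflected_eps_sum:
  assumes "1 \<le> i" "i < j" "j \<le> m"
  shows "reflected (eps_sum i j) l k =
    (if k = i then l * int p - lam_rho j else if k = j then l * int p - lam_rho i else lam_rho k)"
  using assms by (simp add: reflected_def pair_eps_sum eps_sum_apply)

lemma reflected_eps_diff:
  assumes "1 \<le> i" "i < j" "j \<le> m"
  shows "reflected (eps_diff i j) l k =
    (if k = i then lam_rho j + l * int p else if k = j then lam_rho i - l * int p else lam_rho k)"
  using assms by (simp add: reflected_def pair_eps_diff eps_diff_apply)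

lemma reflected_two_eps:
  assumes "i \<in> {1..m}"
  shows "reflected (two_eps i) l k = (if k = i then 2 * (l * int p) - lam_rho i else lam_rho k)"
  using assms by (simp add: reflected_def pair_two_eps two_eps_apply)

lemma mem_jantzen_pairs_iff:
  "(\<alpha>, l) \<in> jantzen_pairs m p lam \<longleftrightarrow> \<alpha> \<in> pos_roots m \<and> 1 \<le> l \<and> l * int p < pair m lam_rho \<alpha>"
  by (simp add: jantzen_pairs_def lam_rho_def)

lemma finite_jantzen_pairs: "finite (jantzen_pairs m p lam)"
proof -
  have "jantzen_pairs m p lam \<subseteq> (\<Union>\<alpha>\<in>pos_roots m. {\<alpha>} \<times> {1..pair m lam_rho \<alpha>})"
  proof clarify
    fix \<alpha> l assume "(\<alpha>, l) \<in> jantzen_pairs m p lam"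
    then have "\<alpha> \<in> pos_roots m" "1 \<le> l" "l * int p < pair m lam_rho \<alpha>"
      by (simp_all add: mem_jantzen_pairs_iff)
    moreover have "l * 1 \<le> l * int p" using p_pos \<open>1 \<le> l\<close> by (intro mult_left_mono) auto
    then have "l \<le> pair m lam_rho \<alpha>" using \<open>l * int p < pair m lam_rho \<alpha>\<close> by linarith
    ultimately show "(\<alpha>, l) \<in> (\<Union>\<alpha>\<in>pos_roots m. {\<alpha>} \<times> {1..pair m lam_rho \<alpha>})" by auto
  qed
  then show ?thesis by (rule finite_subset) (simp add: finite_pos_roots)
qed

lemma mem_R_set_iff:
  "(\<alpha>, l) \<in> R_set m p lam \<longleftrightarrow> (\<exists>i j. \<alpha> = eps_sum i j \<and> 1 \<le> i \<and> i < j \<and> j \<le> num_parts m lam \<and>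
     1 \<le> l \<and> lam_rho i < l * int p \<and> l * int p < lam_rho i + lam_rho j \<and>
     chi m (aff_dot m p \<alpha> l lam) \<noteq> 0)"
proof -
  have pair_sum: "pair m lam_rho (eps_sum i j) = lam_rho i + lam_rho j"
    if "1 \<le> i" "i < j" "j \<le> num_parts m lam" for i j
    using pair_eps_sum[of i j m] num_parts_le[of m lam] that by simp
  have R_set_unfolded: "(\<alpha>, l) \<in> R_set m p lam \<longleftrightarrow> (\<exists>i j. \<alpha> = eps_sum i j \<and> 1 \<le> i \<and> i < j \<and>
     j \<le> num_parts m lam \<and> 1 \<le> l \<and> 1 \<le> pair m lam_rho \<alpha> - l * int p \<and>
     0 < lam_rho j - (pair m lam_rho \<alpha> - l * int p) \<and> chi m (aff_dot m p \<alpha> l lam) \<noteq> 0)"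
    by (simp add: R_set_def Let_def eps_sum_def lam_rho_def)
  show ?thesis
  proof
    assume "(\<alpha>, l) \<in> R_set m p lam"
    then obtain i j where "\<alpha> = eps_sum i j" "1 \<le> i" "i < j" "j \<le> num_parts m lam" "1 \<le> l"
      "1 \<le> pair m lam_rho \<alpha> - l * int p" "0 < lam_rho j - (pair m lam_rho \<alpha> - l * int p)"
      "chi m (aff_dot m p \<alpha> l lam) \<noteq> 0"
      unfolding R_set_unfolded by blast
    then show "\<exists>i j. \<alpha> = eps_sum i j \<and> 1 \<le> i \<and> i < j \<and> j \<le> num_parts m lam \<and>
     1 \<le> l \<and> lam_rho i < l * int p \<and> l * int p < lam_rho i + lam_rho j \<and>
     chi m (aff_dot m p \<alpha> l lam) \<noteq> 0"
      using pair_sum[of i j] by (intro exI[of _ i] exI[of _ j]) auto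
  next
    assume "\<exists>i j. \<alpha> = eps_sum i j \<and> 1 \<le> i \<and> i < j \<and> j \<le> num_parts m lam \<and>
     1 \<le> l \<and> lam_rho i < l * int p \<and> l * int p < lam_rho i + lam_rho j \<and>
     chi m (aff_dot m p \<alpha> l lam) \<noteq> 0"
    then obtain i j where "\<alpha> = eps_sum i j" "1 \<le> i" "i < j" "j \<le> num_parts m lam" "1 \<le> l"
      "lam_rho i < l * int p" "l * int p < lam_rho i + lam_rho j" "chi m (aff_dot m p \<alpha> l lam) \<noteq> 0"
      by blast
    then show "(\<alpha>, l) \<in> R_set m p lam"
      unfolding R_set_unfolded using pair_sum[of i j] by (intro exI[of _ i] exI[of _ j]) auto
  qed
qed

text \<open>Links index both the long-root terms and the terms \<open>(\<epsilon>\<^sub>i + \<epsilon>\<^sub>j, l)\<close> that cancel them.\<close>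

definition links :: "(nat \<times> nat \<times> int) set" where
  "links = {(i, j, l). 1 \<le> i \<and> i < j \<and> j \<le> m \<and> 1 \<le> l \<and> lam_rho i - l * int p = lam_rho j}"

definition long_pairs :: "(weight \<times> int) set" where
  "long_pairs = (\<lambda>(i, j, l). (two_eps i, l)) ` links"

definition link_pairs :: "(weight \<times> int) set" where
  "link_pairs = (\<lambda>(i, j, l). (eps_sum i j, l)) ` links"

lemma inj_on_long_pairs: "inj_on (\<lambda>(i, j, l). (two_eps i, l)) links"
proof (rule inj_onI)
  fix x y assume "x \<in> links" "y \<in> links"
    and eq: "(\<lambda>(i, j, l). (two_eps i, l)) x = (\<lambda>(i, j, l). (two_eps i, l)) y"
  obtain i j l i' j' l' where xy: "x = (i, j, l)" "y = (i', j', l')" by (metis prod_cases3)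
  with eq have "i = i'" "l = l'" by (simp_all add: two_eps_inj)
  moreover from \<open>x \<in> links\<close> \<open>y \<in> links\<close> xy have "lam_rho j = lam_rho i - l * int p"
    "lam_rho j' = lam_rho i' - l' * int p" "j \<in> {1..m}" "j' \<in> {1..m}" by (auto simp: links_def)
  ultimately show "x = y" using xy lam_rho_inj[of j j'] by simp
qed

lemma inj_on_link_pairs: "inj_on (\<lambda>(i, j, l). (eps_sum i j, l)) links"
  by (rule inj_onI) (auto simp: links_def dest: eps_sum_inj)

lemma long_pairs_subset: "long_pairs \<subseteq> jantzen_pairs m p lam"
proof clarify
  fix \<alpha> l assume "(\<alpha>, l) \<in> long_pairs"
  then obtain i j where "(i, j, l) \<in> links" "\<alpha> = two_eps i" by (auto simp: long_pairs_def)
  then show "(\<alpha>, l) \<in> jantzen_pairs m p lam"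
    using lam_rho_pos[of j] by (auto simp: links_def mem_jantzen_pairs_iff pos_roots_iff pair_two_eps)
qed

lemma link_pairs_subset: "link_pairs \<subseteq> jantzen_pairs m p lam"
proof clarify
  fix \<alpha> l assume "(\<alpha>, l) \<in> link_pairs"
  then obtain i j where "(i, j, l) \<in> links" "\<alpha> = eps_sum i j" by (auto simp: link_pairs_def)
  then show "(\<alpha>, l) \<in> jantzen_pairs m p lam"
    using lam_rho_pos[of j] by (auto simp: links_def mem_jantzen_pairs_iff pos_roots_iff pair_eps_sum)
qed

lemma two_eps_in_long_pairs:
  assumes i: "i \<in> {1..m}" and mem: "(two_eps i, l) \<in> jantzen_pairs m p lam"
  shows "(two_eps i, l) \<in> long_pairs"
proof -
  have l: "1 \<le> l" and "0 < lam_rho i - l * int p"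
    using mem i by (simp_all add: mem_jantzen_pairs_iff pair_two_eps)
  then obtain k where "k \<in> {1..m}" "i < k" "lam_rho k = lam_rho i - l * int p"
    using core_step[OF i] by blast
  then have "(i, k, l) \<in> links" using i l by (auto simp: links_def)
  then show ?thesis unfolding long_pairs_def by force
qed

lemma jantzen_term_link_pair:
  assumes link: "(i, j, l) \<in> links"
  shows "jantzen_term m p lam (eps_sum i j, l) = - jantzen_term m p lam (two_eps i, l)"
proof -
  have ij: "1 \<le> i" "i < j" "j \<le> m" and gap: "lam_rho i - l * int p = lam_rho j"
    using link by (simp_all add: links_def)
  have "chi m (aff_dot m p (eps_sum i j) l lam) = - chi m (aff_dot m p (two_eps i) l lam)"
  proof (rule chi_sign_flip)
    show "j \<in> {1..m}" using ij by simp
    fix k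
    show "aff_dot m p (eps_sum i j) l lam k + rho m k =
      (if k = j then - (aff_dot m p (two_eps i) l lam k + rho m k) else aff_dot m p (two_eps i) l lam k + rho m k)"
      using ij gap by (simp add: aff_dot_plus_rho reflected_eps_sum reflected_two_eps)
  qed
  then show ?thesis by (simp add: jantzen_term_def)
qed

lemma sum_long_link_pairs:
  "(\<Sum>t\<in>long_pairs. jantzen_term m p lam t) + (\<Sum>t\<in>link_pairs. jantzen_term m p lam t) = 0"
proof -
  have "(\<Sum>t\<in>long_pairs. jantzen_term m p lam t) = (\<Sum>(i, j, l)\<in>links. jantzen_term m p lam (two_eps i, l))"
    unfolding long_pairs_def by (rule sum.reindex_cong[OF inj_on_long_pairs]) auto
  moreover have "(\<Sum>t\<in>link_pairs. jantzen_term m p lam t) = (\<Sum>(i, j, l)\<in>links. jantzen_term m p lam (eps_sum i j, l))"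
    unfolding link_pairs_def by (rule sum.reindex_cong[OF inj_on_link_pairs]) auto
  ultimately have "(\<Sum>t\<in>long_pairs. jantzen_term m p lam t) + (\<Sum>t\<in>link_pairs. jantzen_term m p lam t) =
      (\<Sum>(i, j, l)\<in>links. jantzen_term m p lam (two_eps i, l) + jantzen_term m p lam (eps_sum i j, l))"
    by (simp add: sum.distrib case_prod_beta)
  also have "\<dots> = 0"
    by (rule sum.neutral) (auto simp: jantzen_term_link_pair)
  finally show ?thesis .
qed

lemma chi_eps_diff_vanishes:
  assumes ij: "1 \<le> i" "i < j" "j \<le> m" and mem: "(eps_diff i j, l) \<in> jantzen_pairs m p lam"
  shows "chi m (aff_dot m p (eps_diff i j) l lam) = 0"
proof -
  have l: "1 \<le> l" and gap: "l * int p < lam_rho i - lam_rho j"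
    using mem ij by (simp_all add: mem_jantzen_pairs_iff pair_eps_diff)
  moreover have "1 \<le> lam_rho j" using ij lam_rho_pos by simp
  ultimately have pos: "0 < lam_rho i - l * int p" by linarith
  have i: "i \<in> {1..m}" using ij by simp
  obtain k where k: "k \<in> {1..m}" "i < k" "lam_rho k = lam_rho i - l * int p"
    using core_step[OF i l pos] by blast
  then have "k \<noteq> j" using gap by auto
  then have "\<not> regular m (reflected (eps_diff i j) l)"
    using k ij by (intro not_regular_if_abs_eq[of k m j]) (auto simp: reflected_eps_diff)
  then show ?thesis using regular_of_chi_nonzero by blast
qed

lemma eps_sum_regular_below:
  assumes ij: "1 \<le> i" "i < j" "j \<le> m" and l: "1 \<le> l"
    and no_link: "(i, j, l) \<notin> links" and reg: "regular m (reflected (eps_sum i j) l)"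
  shows "lam_rho i < l * int p"
proof (rule ccontr)
  assume "\<not> lam_rho i < l * int p"
  then consider "lam_rho i = l * int p" | "0 < lam_rho i - l * int p" by linarith
  then show False
  proof cases
    case 1
    then show False
      using not_regular_if_zero[of j m] reg ij by (simp add: reflected_eps_sum)
  next
    case 2
    moreover have i: "i \<in> {1..m}" using ij by simp
    ultimately obtain k where k: "k \<in> {1..m}" "i < k" "lam_rho k = lam_rho i - l * int p"
      using core_step[OF i l] by blast
    have "k \<noteq> j" using k no_link ij l by (auto simp: links_def)
    then show False
      using not_regular_if_abs_eq[of k m j] reg k ij by (simp add: reflected_eps_sum)
  qed
qed

text \<open>If \<open>j > l(\<lambda>)\<close>, the entries of \<open>\<lambda> + \<rho>\<close> from position \<open>j\<close> on are \<open>m + 1 - j, \<dots>, 1\<close>,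
  i.e. all values in \<open>(0, \<lambda>\<^sub>j + \<rho>\<^sub>j]\<close>, so the reflected \<open>j\<close>-th entry collides with one.\<close>

lemma eps_sum_regular_num_parts:
  assumes ij: "1 \<le> i" "i < j" "j \<le> m"
    and bounds: "lam_rho i < l * int p" "l * int p < lam_rho i + lam_rho j"
    and reg: "regular m (reflected (eps_sum i j) l)"
  shows "j \<le> num_parts m lam"
proof (rule ccontr)
  assume "\<not> j \<le> num_parts m lam"
  then have "lam j = 0" using dominant_zero_beyond_num_parts[OF lam_dominant, of j] ij by simp
  define v where "v = l * int p - lam_rho i"
  have v: "0 < v" "v < int m + 1 - int j"
    using bounds lam_rho_eq[of j] \<open>lam j = 0\<close> ij by (auto simp: v_def)
  define k where "k = nat (int m + 1 - v)"
  have k: "j < k" "k \<le> m" "int k = int m + 1 - v" using v by (auto simp: k_def)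
  moreover have "lam k \<le> lam j" "0 \<le> lam k" using lam_dominant k ij by (simp_all add: dominant_def)
  ultimately have "lam k = 0" using \<open>lam j = 0\<close> by simp
  then have "lam_rho k = v" using lam_rho_eq[of k] k ij by simp
  then show False
    using not_regular_if_abs_eq[of k m j] reg k ij by (simp add: reflected_eps_sum v_def)
qed

lemma eps_sum_in_R_set:
  assumes ij: "1 \<le> i" "i < j" "j \<le> m" and mem: "(eps_sum i j, l) \<in> jantzen_pairs m p lam"
    and chi: "chi m (aff_dot m p (eps_sum i j) l lam) \<noteq> 0" and no_link: "(i, j, l) \<notin> links"
  shows "(eps_sum i j, l) \<in> R_set m p lam"
proof -
  have l: "1 \<le> l" and above: "l * int p < lam_rho i + lam_rho j"
    using mem ij by (simp_all add: mem_jantzen_pairs_iff pair_eps_sum)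
  have reg: "regular m (reflected (eps_sum i j) l)" using chi regular_of_chi_nonzero by simp
  then have below: "lam_rho i < l * int p" using eps_sum_regular_below ij l no_link by blast
  then have "j \<le> num_parts m lam" using eps_sum_regular_num_parts ij above reg by blast
  then show ?thesis using ij l below above chi unfolding mem_R_set_iff by blast
qed

lemma jantzen_term_vanishes:
  assumes mem: "t \<in> jantzen_pairs m p lam"
    and not_R: "t \<notin> R_set m p lam" and "t \<notin> long_pairs" and "t \<notin> link_pairs"
  shows "jantzen_term m p lam t = 0"
proof -
  obtain \<alpha> l where t: "t = (\<alpha>, l)" by fastforce
  have \<alpha>: "\<alpha> \<in> pos_roots m" using mem by (simp add: t mem_jantzen_pairs_iff)
  have "chi m (aff_dot m p \<alpha> l lam) = 0"
  proof (rule ccontr)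
    assume chi: "chi m (aff_dot m p \<alpha> l lam) \<noteq> 0"
    from \<alpha> consider i j where "1 \<le> i" "i < j" "j \<le> m" "\<alpha> = eps_diff i j"
      | i where "1 \<le> i" "i \<le> m" "\<alpha> = two_eps i"
      | i j where "1 \<le> i" "i < j" "j \<le> m" "\<alpha> = eps_sum i j"
      unfolding pos_roots_iff by blast
    then show False
    proof cases
      case (1 i j)
      then show False using chi chi_eps_diff_vanishes mem t by blast
    next
      case (2 i)
      then show False using two_eps_in_long_pairs[of i l] mem t \<open>t \<notin> long_pairs\<close> by simp
    next
      case (3 i j)
      have "(i, j, l) \<notin> links"
      proof
        assume "(i, j, l) \<in> links"
        then have "(eps_sum i j, l) \<in> link_pairs" unfolding link_pairs_def by (rule rev_image_eqI) simp
        with \<open>t \<notin> link_pairs\<close> 3 t show False by simp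
      qed
      then have "t \<in> R_set m p lam" using eps_sum_in_R_set 3 mem chi t by blast
      with not_R show False by blast
    qed
  qed
  then show ?thesis by (simp add: t jantzen_term_def)
qed

theorem jantzen_sum_eq_sum_R_set:
  "(\<Sum>t\<in>jantzen_pairs m p lam. jantzen_term m p lam t) = (\<Sum>t\<in>R_set m p lam. jantzen_term m p lam t)"
proof -
  let ?f = "jantzen_term m p lam"
  have R_subset: "R_set m p lam \<subseteq> jantzen_pairs m p lam"
    using num_parts_le[of m lam]
    by (force simp: mem_R_set_iff mem_jantzen_pairs_iff pos_roots_iff pair_eps_sum)
  have disjoint: "R_set m p lam \<inter> link_pairs = {}" "(R_set m p lam \<union> link_pairs) \<inter> long_pairs = {}"
    using num_parts_le[of m lam] two_eps_ne_eps_sum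
    by (fastforce simp: mem_R_set_iff link_pairs_def long_pairs_def links_def dest: eps_sum_inj)+
  have finite: "finite (R_set m p lam)" "finite link_pairs" "finite long_pairs"
    using finite_jantzen_pairs R_subset link_pairs_subset long_pairs_subset finite_subset by blast+
  have "sum ?f (jantzen_pairs m p lam) = sum ?f (R_set m p lam \<union> link_pairs \<union> long_pairs)"
    using R_subset link_pairs_subset long_pairs_subset jantzen_term_vanishes
    by (intro sum.mono_neutral_right finite_jantzen_pairs) auto
  also have "\<dots> = sum ?f (R_set m p lam) + (sum ?f long_pairs + sum ?f link_pairs)"
    using finite disjoint by (simp add: sum.union_disjoint)
  finally show ?thesis by (simp add: sum_long_link_pairs)
qed

end

theorem mainTheorem2:
  fixes m p :: nat and lam :: weight
  assumes "prime p" and "p > 2" and "m \<ge> 1"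
    and "p_core m p lam"
  shows "(\<Sum>al\<in>jantzen_pairs m p lam. jantzen_term m p lam al)
       = (\<Sum>al\<in>R_set m p lam. jantzen_term m p lam al)"
proof -
  interpret p_core_weight m p lam
    using assms by unfold_locales simp_all
  show ?thesis by (rule jantzen_sum_eq_sum_R_set)
qed

end
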